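(* Let $g:(0,\infty)\to(0,\infty)$ be a function that converges monotonically to zero. If there exists $\epsilon>0$ such that for all $n$ large enough $$\frac{\Lambda_g(n)}{\log\log n}\ \ge\ 2+\epsilon,$$ then $\mathbb P$-almost surely, for all $n$ large enough, $\lambda_1^{(n)}\le 2d\,g(n)$.
   Context: Let $d\ge 2$. Let $\mathfrak E_d=\{\{x,y\}: x,y\in\mathbb Z^d,\ |x-y|_1=1\}$ be the nearest-neighbour edges of $\mathbb Z^d$; write $x\sim y$ if $\{x,y\}\in\mathfrak E_d$. The environment $\boldsymbol w=(w_e)_{e\in\mathfrak E_d}$ (conductances; $w_{xy}=w_{yx}=w_{\{x,y\}}$) is a family of i.i.d. $(0,\infty)$-valued random variables with law $\mathbb P$; $w$ denotes a generic copy. Let $B_n=[-n,n]^d\cap\mathbb Z^d$. For $f\in\ell^2(\mathbb Z^d)$ real-valued, $(\mathcal L_{\boldsymbol w}f)(x)=\sum_{y\sim x}w_{xy}(f(y)-f(x))$ and $\mathcal E^{\boldsymbol w}(f)=\langle f,-\mathcal L_{\boldsymbol w}f\rangle=\frac12\sum_{x}\sum_{y\sim x}w_{xy}(f(x)-f(y))^2$. The principal Dirichlet eigenvalue in $B_n$ is $\lambda_1^{(n)}=\inf\{\mathcal E^{\boldsymbol w}(f): f\in\ell^2(\mathbb Z^d),\ \mathrm{supp}\,f\subseteq B_n,\ \|f\|_2=1\}$. For $g:(0,\infty)\to(0,\infty)$ define $\Lambda_g(u)=u^d\,\mathbb P[w\le g(u)]^{2d}$. *)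

theory Defs
  imports "HOL-Probability.Probability"
begin

text \<open>Points of Z^d are vectors int^'d, with d = CARD('d).\<close>

definition l1dist :: "int^'d \<Rightarrow> int^'d \<Rightarrow> int" where
  "l1dist x y = (\<Sum>i\<in>UNIV. \<bar>x$i - y$i\<bar>)"

definition adj :: "int^'d \<Rightarrow> int^'d \<Rightarrow> bool" where
  "adj x y \<longleftrightarrow> l1dist x y = 1"

definition edges :: "(int^'d) set set" where
  "edges = {{x, y} | x y. adj x y}"

definition box :: "nat \<Rightarrow> (int^'d) set" where
  "box n = {x. \<forall>i. \<bar>x$i\<bar> \<le> int n}"

definition energy :: "((int^'d) set \<Rightarrow> real) \<Rightarrow> (int^'d \<Rightarrow> real) \<Rightarrow> real" where
  "energy w f = (\<Sum>\<^sub>\<infinity>x. (\<Sum>y\<in>{y. adj x y}. w {x, y} * (f x - f y)^2)) / 2"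

definition l2norm_sq :: "(int^'d \<Rightarrow> real) \<Rightarrow> real" where
  "l2norm_sq f = (\<Sum>\<^sub>\<infinity>x. (f x)^2)"

definition lambda1 :: "((int^'d) set \<Rightarrow> real) \<Rightarrow> nat \<Rightarrow> real" where
  "lambda1 w n = Inf {energy w f | f. (\<forall>x. f x \<noteq> 0 \<longrightarrow> x \<in> box n) \<and> l2norm_sq f = 1}"

definition Lambda :: "nat \<Rightarrow> real measure \<Rightarrow> (real \<Rightarrow> real) \<Rightarrow> real \<Rightarrow> real" where
  "Lambda d \<mu> g u = u ^ d * (measure \<mu> {..g u}) ^ (2 * d)"

end

theory Submission
  imports Defs
begin

text \<open>Call a site x a trap at level t if all 2d conductances at x are at most t; the indicator
  of a trap in B_n is a test function of energy at most 2d t. Along the scales n_k = \<lceil>r^k\<rceil>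
  with r^d = 3/2, the points of B_{n_k} with even coordinates are about n_k^d sites with pairwise
  disjoint edge sets, so by independence none of them is a trap at level g(n_{k+1}) with
  probability at most (1 - P[w \<le> g(n_{k+1})]^{2d})^{n_k^d} \<le> exp(-\<Lambda>_g(n_{k+1})/2)
  \<le> (log n_{k+1})^{-(1+\<epsilon>/2)}, which is summable in k. By Borel-Cantelli almost surely every
  large scale has a trap, and for n_k \<le> n < n_{k+1} that trap lies in B_n with conductances
  at most g(n_{k+1}) \<le> g(n).\<close>

lemma adj_sym: "adj x y \<longleftrightarrow> adj y x"
  unfolding adj_def l1dist_def by (simp add: abs_minus_commute)

lemma not_adj_self: "\<not> adj x x"
  unfolding adj_def l1dist_def by simp

lemma adj_imp_edge: "adj x y \<Longrightarrow> {x, y} \<in> edges"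
  unfolding edges_def by blast

lemma l1dist_add_axis: "l1dist x (x + axis i s) = \<bar>s\<bar>"
proof -
  have "l1dist x (x + axis i s) = (\<Sum>j\<in>UNIV. if j = i then \<bar>s\<bar> else 0)"
    unfolding l1dist_def by (intro sum.cong) (auto simp: axis_def)
  then show ?thesis by simp
qed

lemma adj_iff_axis: "adj x y \<longleftrightarrow> (\<exists>i. \<exists>s\<in>{1,-1}. y = x + axis i s)"
proof
  assume "adj x y"
  then have sum1: "(\<Sum>j\<in>UNIV. \<bar>y$j - x$j\<bar>) = 1"
    by (simp add: adj_def l1dist_def abs_minus_commute)
  then obtain i where i: "y$i \<noteq> x$i"
    by (metis (no_types, lifting) diff_self abs_0 sum.neutral zero_neq_one)
  have split: "(\<Sum>j\<in>UNIV. \<bar>y$j - x$j\<bar>) = \<bar>y$i - x$i\<bar> + (\<Sum>j\<in>UNIV-{i}. \<bar>y$j - x$j\<bar>)"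
    by (simp add: sum.remove)
  have "(\<Sum>j\<in>UNIV-{i}. \<bar>y$j - x$j\<bar>) \<ge> 0" by (simp add: sum_nonneg)
  then have yi: "\<bar>y$i - x$i\<bar> = 1" and rest: "(\<Sum>j\<in>UNIV-{i}. \<bar>y$j - x$j\<bar>) = 0"
    using sum1 split i by linarith+
  have "y$j = x$j" if "j \<noteq> i" for j
    using rest that by (subst (asm) sum_nonneg_eq_0_iff) auto
  then have "y = x + axis i (y$i - x$i)"
    by (auto simp: vec_eq_iff axis_def)
  moreover have "y$i - x$i \<in> {1,-1}" using yi by (auto simp: abs_if split: if_splits)
  ultimately show "\<exists>i. \<exists>s\<in>{1,-1}. y = x + axis i s" by blast
next
  assume "\<exists>i. \<exists>s\<in>{1,-1}. y = x + axis i s"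
  then show "adj x y" by (auto simp: adj_def l1dist_add_axis)
qed

definition neighbours :: "int^'d \<Rightarrow> (int^'d) set" where
  "neighbours x = {y. adj x y}"

lemma neighbours_eq: "neighbours x = (\<lambda>(i, s). x + axis i s) ` (UNIV \<times> {1,-1})"
  unfolding neighbours_def adj_iff_axis by auto

lemma finite_neighbours: "finite (neighbours x)"
  unfolding neighbours_eq by simp

lemma card_neighbours_le: "card (neighbours (x::int^'d)) \<le> 2 * CARD('d)"
proof -
  have "card (neighbours x) \<le> card (UNIV \<times> {1::int,-1} :: ('d \<times> int) set)"
    unfolding neighbours_eq by (rule card_image_le) simp
  then show ?thesis by (simp add: card_cartesian_product)
qed

definition incident_edges :: "int^'d \<Rightarrow> (int^'d) set set" where
  "incident_edges x = (\<lambda>y. {x, y}) ` neighbours x"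

lemma finite_incident_edges: "finite (incident_edges x)"
  unfolding incident_edges_def by (simp add: finite_neighbours)

lemma card_incident_edges_le: "card (incident_edges (x::int^'d)) \<le> 2 * CARD('d)"
  unfolding incident_edges_def
  using card_image_le[OF finite_neighbours] card_neighbours_le order_trans by blast

lemma incident_edges_subset: "incident_edges x \<subseteq> edges"
  unfolding incident_edges_def neighbours_def edges_def by auto

lemma incident_edges_nonempty: "incident_edges x \<noteq> {}"
  unfolding incident_edges_def neighbours_eq by simp

lemma incident_edges_disjoint:
  assumes "x \<noteq> x'" "\<not> adj x x'"
  shows "incident_edges x \<inter> incident_edges x' = {}"
  using assms by (auto simp: incident_edges_def neighbours_def doubleton_eq_iff adj_sym)

lemma l2norm_sq_indicator: "l2norm_sq (indicator {x}) = 1"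
proof -
  have "l2norm_sq (indicator {x}) = (\<Sum>\<^sub>\<infinity>z\<in>{x}. (indicator {x} z)\<^sup>2)"
    unfolding l2norm_sq_def by (rule infsum_cong_neutral) auto
  then show ?thesis by simp
qed

lemma energy_indicator: "energy w (indicator {x}) = (\<Sum>y\<in>neighbours x. w {x, y})"
proof -
  let ?h = "\<lambda>z. \<Sum>y\<in>{y. adj z y}. w {z, y} * (indicator {x} z - indicator {x} y)\<^sup>2 :: real"
  let ?A = "\<Sum>y\<in>neighbours x. w {x, y}"
  have hx: "?h x = ?A"
    unfolding neighbours_def by (rule sum.cong) (auto simp: indicator_def not_adj_self)
  have hz: "?h z = (if adj z x then w {x, z} else 0)" if "z \<noteq> x" for z
  proof -
    have "?h z = (\<Sum>y\<in>neighbours z. if y = x then w {z, y} else 0)"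
      unfolding neighbours_def by (rule sum.cong) (auto simp: that)
    also have "\<dots> = (if adj z x then w {x, z} else 0)"
      using finite_neighbours[of z] by (simp add: neighbours_def insert_commute)
    finally show ?thesis .
  qed
  have "(\<Sum>\<^sub>\<infinity>z. ?h z) = (\<Sum>\<^sub>\<infinity>z\<in>insert x (neighbours x). ?h z)"
  proof (rule infsum_cong_neutral)
    fix z assume "z \<in> UNIV - insert x (neighbours x)"
    then show "?h z = 0" using hz[of z] by (auto simp: neighbours_def adj_sym)
  qed auto
  also have "\<dots> = ?h x + (\<Sum>z\<in>neighbours x. ?h z)"
    using finite_neighbours[of x] by (simp add: not_adj_self neighbours_def)
  also have "(\<Sum>z\<in>neighbours x. ?h z) = ?A"
  proof (rule sum.cong)
    fix z assume "z \<in> neighbours x"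
    then have "z \<noteq> x" "adj z x" by (auto simp: neighbours_def not_adj_self adj_sym)
    then show "?h z = w {x, z}" using hz[of z] by simp
  qed simp
  finally show ?thesis using hx unfolding energy_def by simp
qed

lemma energy_nonneg:
  assumes "\<And>x y. adj x y \<Longrightarrow> w {x, y} \<ge> 0"
  shows "energy w f \<ge> 0"
  unfolding energy_def
  by (intro divide_nonneg_pos infsum_nonneg sum_nonneg mult_nonneg_nonneg) (auto intro: assms)

lemma lambda1_le_incident_edges:
  fixes x :: "int^'d"
  assumes nonneg: "\<And>x y. adj x y \<Longrightarrow> w {x, y} \<ge> 0"
    and "x \<in> box n" "t \<ge> 0"
    and le: "\<And>e. e \<in> incident_edges x \<Longrightarrow> w e \<le> t"
  shows "lambda1 w n \<le> 2 * real CARD('d) * t"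
proof -
  have "energy w (indicator {x})
      \<in> {energy w f | f. (\<forall>z. f z \<noteq> 0 \<longrightarrow> z \<in> box n) \<and> l2norm_sq f = 1}"
    using \<open>x \<in> box n\<close> l2norm_sq_indicator
    by (intro CollectI exI[of _ "indicator {x}"]) (auto split: split_indicator)
  then have "lambda1 w n \<le> energy w (indicator {x})"
    unfolding lambda1_def by (rule cInf_lower) (auto intro!: bdd_belowI[of _ 0] energy_nonneg nonneg)
  also have "\<dots> = (\<Sum>y\<in>neighbours x. w {x, y})" by (rule energy_indicator)
  also have "\<dots> \<le> (\<Sum>y\<in>neighbours x. t)"
    by (rule sum_mono) (auto simp: incident_edges_def le)
  also have "\<dots> \<le> real (2 * CARD('d)) * t"
    using card_neighbours_le[of x] \<open>t \<ge> 0\<close> by (simp add: mult_right_mono)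
  finally show ?thesis by simp
qed

lemma bij_betw_vec_nth_box:
  "bij_betw vec_nth (box m :: (int^'d) set) (PiE UNIV (\<lambda>_. {-int m..int m}))"
proof (rule bij_betw_imageI)
  show "inj_on vec_nth (box m)" by (simp add: inj_on_def vec_nth_inject)
  have "f \<in> vec_nth ` (box m :: (int^'d) set)"
    if "f \<in> PiE UNIV (\<lambda>_. {-int m..int m})" for f :: "'d \<Rightarrow> int"
  proof -
    have "vec_lambda f \<in> box m"
      using that by (auto simp: box_def abs_le_iff PiE_UNIV_domain Pi_iff minus_le_iff)
    then show ?thesis by (intro image_eqI[of _ _ "vec_lambda f"]) (simp_all add: fun_eq_iff)
  qed
  then have "PiE UNIV (\<lambda>_. {-int m..int m}) \<subseteq> vec_nth ` (box m :: (int^'d) set)" by blast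
  moreover have "vec_nth ` (box m :: (int^'d) set) \<subseteq> PiE UNIV (\<lambda>_. {-int m..int m})"
    by (auto simp: box_def abs_le_iff PiE_UNIV_domain minus_le_iff)
  ultimately show "vec_nth ` (box m :: (int^'d) set) = PiE UNIV (\<lambda>_. {-int m..int m})" by blast
qed

lemma finite_box: "finite (box m :: (int^'d) set)"
  using bij_betw_finite[OF bij_betw_vec_nth_box] by (simp add: finite_PiE)

lemma card_box: "card (box m :: (int^'d) set) = (2 * m + 1) ^ CARD('d)"
proof -
  have "card (box m :: (int^'d) set) = (\<Prod>i\<in>(UNIV::'d set). card {-int m..int m})"
    using bij_betw_same_card[OF bij_betw_vec_nth_box] by (simp add: card_PiE)
  also have "\<dots> = (2 * m + 1) ^ CARD('d)"
    by (simp add: nat_add_distrib nat_mult_distrib)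
  finally show ?thesis .
qed

lemma box_mono: "m \<le> n \<Longrightarrow> box m \<subseteq> box n"
  by (auto simp: box_def) (meson of_nat_le_iff order_trans)

definition even_points :: "nat \<Rightarrow> (int^'d) set" where
  "even_points m = (*s) 2 ` box m"

lemma finite_even_points: "finite (even_points m)"
  unfolding even_points_def by (simp add: finite_box)

lemma card_even_points: "card (even_points m :: (int^'d) set) = (2 * m + 1) ^ CARD('d)"
proof -
  have "inj ((*s) (2::int) :: int^'d \<Rightarrow> int^'d)" by (rule injI) (simp add: vec_eq_iff)
  then show ?thesis
    unfolding even_points_def using card_image[OF inj_on_subset] card_box by (metis subset_UNIV)
qed

lemma card_even_points_half_ge: "real n ^ CARD('d) \<le> card (even_points (n div 2) :: (int^'d) set)"
proof -
  have "real n \<le> real (2 * (n div 2) + 1)" by linarith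
  then show ?thesis unfolding card_even_points by (simp add: power_mono)
qed

lemma even_points_half_subset_box: "even_points (n div 2) \<subseteq> box n"
proof -
  have "2 * \<bar>z\<bar> \<le> int n" if "\<bar>z\<bar> \<le> int (n div 2)" for z :: int
    using that by linarith
  then show ?thesis unfolding even_points_def box_def by (auto simp: abs_mult)
qed

lemma even_points_not_adj:
  assumes "x \<in> even_points m" "x' \<in> even_points m"
  shows "\<not> adj x x'"
proof -
  obtain z z' where "x = 2 *s z" "x' = 2 *s z'"
    using assms unfolding even_points_def by blast
  then have "x$i - x'$i = 2 * (z$i - z'$i)" for i by simp
  then have "even (l1dist x x')" unfolding l1dist_def by (intro dvd_sum) (simp add: abs_mult)
  then show ?thesis unfolding adj_def by (metis odd_one)
qed

definition geom_nat :: "real \<Rightarrow> nat \<Rightarrow> nat" where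
  "geom_nat r k = nat \<lceil>r ^ k\<rceil>"

lemma geom_nat_ge: "1 \<le> r \<Longrightarrow> r ^ k \<le> real (geom_nat r k)"
  unfolding geom_nat_def by linarith

lemma geom_nat_le: "1 \<le> r \<Longrightarrow> real (geom_nat r k) \<le> r ^ k + 1"
proof -
  assume "1 \<le> r"
  then have "0 \<le> r ^ k" by simp
  then show ?thesis unfolding geom_nat_def by linarith
qed

lemma mono_geom_nat: "1 \<le> r \<Longrightarrow> mono (geom_nat r)"
  unfolding geom_nat_def by (intro monoI nat_mono ceiling_mono power_increasing) auto

lemma geom_nat_unbounded: "1 < r \<Longrightarrow> \<exists>k. n < geom_nat r k"
proof -
  assume r: "1 < r"
  obtain k where "real n < r ^ k" using real_arch_pow[OF r] by blast
  then show ?thesis using geom_nat_ge[of r k] r by (intro exI[of _ k]) linarith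
qed

lemma eventually_ge_geom_nat:
  assumes "1 < r"
  shows "\<forall>\<^sub>F k in sequentially. m \<le> geom_nat r k"
proof -
  obtain k0 where "m < geom_nat r k0" using geom_nat_unbounded[OF assms] by blast
  then show ?thesis
    using mono_geom_nat[of r] assms unfolding eventually_sequentially
    by (meson dual_order.trans less_imp_le monoD)
qed

lemma eventually_geom_nat_Suc_pow_le:
  assumes r: "1 < r" and "r ^ d < 2"
  shows "\<forall>\<^sub>F k in sequentially. real (geom_nat r (Suc k)) ^ d \<le> 2 * real (geom_nat r k) ^ d"
proof -
  have "(\<lambda>k. (r + inverse r ^ k) ^ d) \<longlonglongrightarrow> (r + 0) ^ d"
    using r by (intro tendsto_intros LIMSEQ_realpow_zero) (auto simp: inverse_less_1_iff)
  then have "\<forall>\<^sub>F k in sequentially. (r + inverse r ^ k) ^ d < 2"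
    using \<open>r ^ d < 2\<close> by (intro order_tendstoD) auto
  then show ?thesis
  proof (rule eventually_mono)
    fix k assume k: "(r + inverse r ^ k) ^ d < 2"
    have "real (geom_nat r (Suc k)) \<le> r ^ Suc k + 1" using r by (intro geom_nat_le) simp
    also have "\<dots> = r ^ k * (r + inverse r ^ k)"
      using r by (simp add: field_simps power_inverse)
    also have "\<dots> \<le> real (geom_nat r k) * (r + inverse r ^ k)"
      using r geom_nat_ge[of r k] by (intro mult_right_mono) auto
    finally have "real (geom_nat r (Suc k)) ^ d \<le> real (geom_nat r k) ^ d * (r + inverse r ^ k) ^ d"
      by (subst power_mult_distrib[symmetric]) (intro power_mono, auto)
    also have "\<dots> \<le> real (geom_nat r k) ^ d * 2" using k by (intro mult_left_mono) auto
    finally show "real (geom_nat r (Suc k)) ^ d \<le> 2 * real (geom_nat r k) ^ d" by simp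
  qed
qed

lemma one_minus_pow_le_exp:
  fixes q :: real
  assumes "q \<le> 1"
  shows "(1 - q) ^ N \<le> exp (- (q * N))"
proof -
  have "(1 - q) ^ N \<le> exp (- q) ^ N"
    using assms exp_ge_add_one_self[of "- q"] by (intro power_mono) auto
  then show ?thesis by (simp add: exp_of_nat_mult[symmetric] mult.commute)
qed

lemma one_minus_pow_le_ln_powr:
  fixes q \<epsilon> :: real
  assumes "0 \<le> q" "q \<le> 1" "3 \<le> n"
    and growth: "(2 + \<epsilon>) * ln (ln (real n)) \<le> real n ^ d * q"
    and N: "real n ^ d \<le> 2 * real N"
  shows "(1 - q) ^ N \<le> ln (real n) powr - (1 + \<epsilon> / 2)"
proof -
  have ln_ge_1: "1 \<le> ln (real n)"
    using exp_le \<open>3 \<le> n\<close> by (subst ln_ge_iff) auto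
  have "(1 + \<epsilon> / 2) * ln (ln (real n)) \<le> q * N"
    using growth mult_left_mono[OF N \<open>0 \<le> q\<close>] by (simp add: field_simps)
  then have "exp (- (q * N)) \<le> exp (- ((1 + \<epsilon> / 2) * ln (ln (real n))))" by simp
  also have "\<dots> = ln (real n) powr - (1 + \<epsilon> / 2)"
    using ln_ge_1 by (simp add: powr_def algebra_simps)
  finally show ?thesis using one_minus_pow_le_exp[OF \<open>q \<le> 1\<close>, of N] by linarith
qed

lemma summable_Suc_mult_powr:
  assumes "c > 1" "L > 0"
  shows "summable (\<lambda>k::nat. (real (Suc k) * L) powr - c)"
proof -
  have "summable (\<lambda>k::nat. real (Suc k) powr - c)"
    using assms summable_Suc_iff[of "\<lambda>n. real n powr - c"] by (simp add: summable_real_powr_iff)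
  then have "summable (\<lambda>k::nat. L powr - c * real (Suc k) powr - c)" by (rule summable_mult)
  then show ?thesis using assms by (simp add: powr_mult mult.commute)
qed

context prob_space
begin

lemma prob_space_law:
  fixes W :: "(int^'d) set \<Rightarrow> 'a \<Rightarrow> real"
  assumes indep: "indep_vars (\<lambda>_. borel) W edges"
    and law: "\<And>e. e \<in> edges \<Longrightarrow> distr M borel (W e) = \<mu>"
  shows "prob_space \<mu>"
proof -
  obtain e :: "(int^'d) set" where "e \<in> edges"
    using incident_edges_nonempty incident_edges_subset by blast
  moreover have "W e \<in> borel_measurable M" using indep \<open>e \<in> edges\<close> by (auto simp: indep_vars_def)
  ultimately show ?thesis using law by (metis prob_space_distr)
qed

lemma prob_incident_edges_le_ge:
  fixes W :: "(int^'d) set \<Rightarrow> 'a \<Rightarrow> real"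
  assumes indep: "indep_vars (\<lambda>_. borel) W edges"
    and law: "\<And>e. e \<in> edges \<Longrightarrow> distr M borel (W e) = \<mu>"
  shows "prob (\<Inter>e\<in>incident_edges x. W e -` {..t} \<inter> space M)
           \<ge> measure \<mu> {..t} ^ (2 * CARD('d))"
proof -
  have rv: "W e \<in> borel_measurable M" if "e \<in> edges" for e
    using indep that by (auto simp: indep_vars_def)
  have law_prob: "measure \<mu> {..t} = prob (W e -` {..t} \<inter> space M)" if "e \<in> edges" for e
    using law[OF that] measure_distr[OF rv[OF that], of "{..t}"] by simp
  then have p_le_1: "measure \<mu> {..t} \<le> 1"
    using incident_edges_nonempty[of x] incident_edges_subset[of x] by fastforce
  have "prob (\<Inter>e\<in>incident_edges x. W e -` {..t} \<inter> space M)
      = (\<Prod>e\<in>incident_edges x. prob (W e -` {..t} \<inter> space M))"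
    using incident_edges_nonempty finite_incident_edges incident_edges_subset
    by (intro indep_varsD[OF indep]) auto
  also have "\<dots> = (\<Prod>e\<in>incident_edges x. measure \<mu> {..t})"
    using incident_edges_subset[of x] law_prob by (intro prod.cong) auto
  also have "\<dots> = measure \<mu> {..t} ^ card (incident_edges x)" by simp
  also have "\<dots> \<ge> measure \<mu> {..t} ^ (2 * CARD('d))"
    using p_le_1 card_incident_edges_le[of x] by (intro power_decreasing) auto
  finally show ?thesis .
qed

lemma prob_all_incident_edges_exceed_le:
  fixes W :: "(int^'d) set \<Rightarrow> 'a \<Rightarrow> real"
  assumes indep: "indep_vars (\<lambda>_. borel) W edges"
    and law: "\<And>e. e \<in> edges \<Longrightarrow> distr M borel (W e) = \<mu>"
    and S: "finite S" "\<And>x x'. x \<in> S \<Longrightarrow> x' \<in> S \<Longrightarrow> \<not> adj x x'"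
  shows "prob {\<omega> \<in> space M. \<forall>x\<in>S. \<exists>e\<in>incident_edges x. t < W e \<omega>}
           \<le> (1 - measure \<mu> {..t} ^ (2 * CARD('d))) ^ card S"
proof (cases "S = {}")
  case False
  have rv: "W e \<in> borel_measurable M" if "e \<in> edges" for e
    using indep that by (auto simp: indep_vars_def)
  let ?N = "\<lambda>x. PiM (incident_edges x) (\<lambda>_. borel :: real measure)"
  let ?Y = "\<lambda>x \<omega>. restrict (\<lambda>e. W e \<omega>) (incident_edges x)"
  have "disjoint_family_on incident_edges S"
    unfolding disjoint_family_on_def using S(2) incident_edges_disjoint by blast
  then have indep_Y: "indep_vars ?N ?Y S"
    using incident_edges_subset by (intro indep_vars_restrict[OF indep])
  define B where "B x = {f \<in> space (?N x). \<exists>e\<in>incident_edges x. t < f e}" for x :: "int^'d"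
  have B_sets: "B x \<in> sets (?N x)" for x
  proof -
    have "B x = (\<Union>e\<in>incident_edges x. (\<lambda>f. f e) -` {t<..} \<inter> space (?N x))"
      unfolding B_def by auto
    also have "\<dots> \<in> sets (?N x)"
      using finite_incident_edges[of x]
      by (intro sets.finite_UN) (auto intro!: measurable_sets[OF measurable_component_singleton])
    finally show ?thesis .
  qed
  define G where "G x = (\<Inter>e\<in>incident_edges x. W e -` {..t} \<inter> space M)" for x :: "int^'d"
  have G_events: "G x \<in> events" for x
    unfolding G_def using incident_edges_nonempty[of x] incident_edges_subset[of x]
    by (intro sets.finite_INT finite_incident_edges measurable_sets[OF rv]) auto
  have Y_B: "?Y x -` B x \<inter> space M = space M - G x" for x
    unfolding B_def G_def using incident_edges_nonempty[of x] by (auto simp: space_PiM not_le)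
  have "{\<omega> \<in> space M. \<forall>x\<in>S. \<exists>e\<in>incident_edges x. t < W e \<omega>}
      = (\<Inter>x\<in>S. ?Y x -` B x \<inter> space M)"
    using False unfolding B_def by (auto simp: space_PiM)
  then have "prob {\<omega> \<in> space M. \<forall>x\<in>S. \<exists>e\<in>incident_edges x. t < W e \<omega>}
      = (\<Prod>x\<in>S. prob (space M - G x))"
    using indep_varsD[OF indep_Y False S(1) order_refl B_sets] by (simp add: Y_B)
  also have "\<dots> \<le> (\<Prod>x\<in>S. 1 - measure \<mu> {..t} ^ (2 * CARD('d)))"
    using prob_incident_edges_le_ge[OF indep law] G_events
    by (intro prod_mono) (auto simp: prob_compl G_def)
  finally show ?thesis by simp
qed simp

lemma AE_eventually_low_incident_edges:
  fixes W :: "(int^'d) set \<Rightarrow> 'a \<Rightarrow> real"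
  assumes indep: "indep_vars (\<lambda>_. borel) W edges"
    and law: "\<And>e. e \<in> edges \<Longrightarrow> distr M borel (W e) = \<mu>"
    and S: "\<And>k. finite (S k)" "\<And>k x x'. x \<in> S k \<Longrightarrow> x' \<in> S k \<Longrightarrow> \<not> adj x x'"
    and summable: "summable (\<lambda>k. (1 - measure \<mu> {..t k} ^ (2 * CARD('d))) ^ card (S k))"
  shows "AE \<omega> in M. \<forall>\<^sub>F k in sequentially. \<exists>x\<in>S k. \<forall>e\<in>incident_edges x. W e \<omega> \<le> t k"
proof -
  define A where "A k = {\<omega> \<in> space M. \<forall>x\<in>S k. \<exists>e\<in>incident_edges x. t k < W e \<omega>}" for k
  have rv: "W e \<in> borel_measurable M" if "e \<in> edges" for e
    using indep that by (auto simp: indep_vars_def)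
  have exceed_event: "{\<omega> \<in> space M. c < W e \<omega>} \<in> events" if "e \<in> edges" for e c
  proof -
    have "{\<omega> \<in> space M. c < W e \<omega>} = W e -` {c<..} \<inter> space M" by auto
    then show ?thesis using measurable_sets[OF rv[OF that]] by simp
  qed
  have A_events: "A k \<in> events" for k
    unfolding A_def using S(1) incident_edges_subset exceed_event
    by (intro sets.sets_Collect_finite_All sets.sets_Collect_finite_Ex finite_incident_edges) blast+
  have "summable (\<lambda>k. prob (A k))"
    using prob_all_incident_edges_exceed_le[OF indep law S]
    by (intro summable_comparison_test[OF _ summable]) (auto simp: A_def)
  then have "AE \<omega> in M. \<forall>\<^sub>F k in sequentially. \<omega> \<in> space M - A k"
    using A_events by (intro borel_cantelli_AE1) (auto simp: less_top[symmetric])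
  then show ?thesis
    by eventually_elim (auto elim!: eventually_mono simp: A_def not_less)
qed

end

lemma summable_one_minus_pow_geom_nat:
  fixes \<mu> :: "real measure" and g :: "real \<Rightarrow> real" and N :: "nat \<Rightarrow> nat"
  assumes "prob_space \<mu>" "\<epsilon> > 0" and r: "1 < r" "r ^ d < 2"
    and growth: "\<forall>\<^sub>F n in sequentially. 2 + \<epsilon> \<le> Lambda d \<mu> g (real n) / ln (ln (real n))"
    and N: "\<And>k. real (geom_nat r k) ^ d \<le> real (N k)"
  shows "summable (\<lambda>k. (1 - measure \<mu> {..g (real (geom_nat r (Suc k)))} ^ (2 * d)) ^ N k)"
proof (rule summable_comparison_test_ev)
  let ?c = "1 + \<epsilon> / 2"
  show "summable (\<lambda>k. (real (Suc k) * ln r) powr - ?c)"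
    using assms by (intro summable_Suc_mult_powr) auto
  obtain n0 where n0: "\<And>n. n0 \<le> n \<Longrightarrow> 2 + \<epsilon> \<le> Lambda d \<mu> g (real n) / ln (ln (real n))"
    using growth unfolding eventually_sequentially by blast
  have "\<forall>\<^sub>F k in sequentially. max n0 3 \<le> geom_nat r (Suc k)"
    using eventually_ge_geom_nat[OF r(1)] by (subst eventually_sequentially_Suc)
  then show "\<forall>\<^sub>F k in sequentially.
      norm ((1 - measure \<mu> {..g (real (geom_nat r (Suc k)))} ^ (2 * d)) ^ N k)
        \<le> (real (Suc k) * ln r) powr - ?c"
    using eventually_geom_nat_Suc_pow_le[OF r]
  proof eventually_elim
    case (elim k)
    define n where "n = geom_nat r (Suc k)"
    define q where "q = measure \<mu> {..g (real n)} ^ (2 * d)"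
    have q: "0 \<le> q" "q \<le> 1"
      unfolding q_def using prob_space.prob_le_1[OF \<open>prob_space \<mu>\<close>] by (auto intro: power_le_one)
    have n: "n0 \<le> n" "3 \<le> n" using elim(1) by (auto simp: n_def)
    have "0 \<le> ln (ln (real n))" using exp_le n(2) by (subst ln_ge_iff) (auto simp: ln_ge_iff)
    then have "(2 + \<epsilon>) * ln (ln (real n)) \<le> real n ^ d * q"
      using n0[OF n(1)] \<open>\<epsilon> > 0\<close> by (auto simp: le_divide_eq Lambda_def q_def split: if_splits)
    moreover have "real n ^ d \<le> 2 * real (N k)"
      using elim(2) N[of k] unfolding n_def by linarith
    ultimately have "(1 - q) ^ N k \<le> ln (real n) powr - ?c"
      by (rule one_minus_pow_le_ln_powr[OF q n(2)])
    also have "\<dots> \<le> (real (Suc k) * ln r) powr - ?c"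
    proof (rule powr_mono2')
      have "ln (r ^ Suc k) \<le> ln (real n)"
        using r(1) geom_nat_ge[of r "Suc k"] n(2) unfolding n_def by (subst ln_le_cancel_iff) auto
      then show "real (Suc k) * ln r \<le> ln (real n)" by (simp only: ln_realpow)
    qed (use r(1) \<open>\<epsilon> > 0\<close> in auto)
    finally show ?case using q by (simp add: n_def q_def)
  qed
qed

lemma mono_nat_bracket:
  fixes s :: "nat \<Rightarrow> nat"
  assumes "mono s" and unbounded: "\<And>n. \<exists>k. n < s k" and "s K \<le> n"
  shows "\<exists>k\<ge>K. s k \<le> n \<and> n < s (Suc k)"
proof -
  define L where "L = (LEAST j. n < s j)"
  have L: "n < s L" unfolding L_def using unbounded by (rule LeastI_ex)
  have below_L: "s j \<le> n" if "j < L" for j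
    using not_less_Least[of j "\<lambda>j. n < s j"] that unfolding L_def by simp
  have "K < L"
  proof (rule ccontr)
    assume "\<not> K < L"
    then have "s L \<le> s K" using \<open>mono s\<close> by (simp add: monoD)
    then show False using L \<open>s K \<le> n\<close> by simp
  qed
  then have "K \<le> L - 1" "s (L - 1) \<le> n" "n < s (Suc (L - 1))"
    using below_L[of "L - 1"] L by simp_all
  then show ?thesis by blast
qed

lemma eventually_lambda1_le_of_subsequence:
  fixes w :: "(int^'d) set \<Rightarrow> real" and s :: "nat \<Rightarrow> nat" and T :: "nat \<Rightarrow> (int^'d) set"
  assumes nonneg: "\<And>x y. adj x y \<Longrightarrow> 0 \<le> w {x, y}"
    and gpos: "\<And>u. u > 0 \<Longrightarrow> g u > 0"
    and gmono: "\<And>u v. 0 < u \<Longrightarrow> u \<le> v \<Longrightarrow> g v \<le> g u"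
    and s: "mono s" "\<And>n. \<exists>k. n < s k"
    and T: "\<And>k. T k \<subseteq> box (s k)"
    and traps: "\<forall>\<^sub>F k in sequentially. \<exists>x\<in>T k. \<forall>e\<in>incident_edges x. w e \<le> g (real (s (Suc k)))"
  shows "\<forall>\<^sub>F n in sequentially. lambda1 w n \<le> 2 * real CARD('d) * g (real n)"
proof -
  obtain K
    where K: "\<And>k. K \<le> k \<Longrightarrow> \<exists>x\<in>T k. \<forall>e\<in>incident_edges x. w e \<le> g (real (s (Suc k)))"
    using traps unfolding eventually_sequentially by blast
  have "lambda1 w n \<le> 2 * real CARD('d) * g (real n)" if n: "max (s K) 1 \<le> n" for n
  proof -
    obtain k where "K \<le> k" "s k \<le> n" "n < s (Suc k)"
      using mono_nat_bracket[OF s] n by auto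
    moreover obtain x where "x \<in> T k"
      and x: "\<And>e. e \<in> incident_edges x \<Longrightarrow> w e \<le> g (real (s (Suc k)))"
      using K[OF \<open>K \<le> k\<close>] by blast
    ultimately have "x \<in> box n" using T box_mono by blast
    moreover have "w e \<le> g (real n)" if "e \<in> incident_edges x" for e
      using x[OF that] gmono[of "real n" "real (s (Suc k))"] n \<open>n < s (Suc k)\<close> by simp
    ultimately show ?thesis
      using gpos[of "real n"] n by (intro lambda1_le_incident_edges) (auto intro: nonneg)
  qed
  then show ?thesis unfolding eventually_sequentially by blast
qed

theorem theorem1p1:
  fixes M :: "'w measure" and W :: "(int^'d) set \<Rightarrow> 'w \<Rightarrow> real"
    and \<mu> :: "real measure" and g :: "real \<Rightarrow> real"
  assumes d2: "CARD('d) \<ge> 2"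
    and P: "prob_space M"
    and indep: "prob_space.indep_vars M (\<lambda>_. borel) W (edges :: (int^'d) set set)"
    and law: "\<And>e. e \<in> (edges :: (int^'d) set set) \<Longrightarrow> distr M borel (W e) = \<mu>"
    and pos: "\<And>e \<omega>. e \<in> (edges :: (int^'d) set set) \<Longrightarrow> \<omega> \<in> space M \<Longrightarrow> W e \<omega> > 0"
    and gpos: "\<And>u. u > 0 \<Longrightarrow> g u > 0"
    and gmono: "\<And>u v. 0 < u \<Longrightarrow> u \<le> v \<Longrightarrow> g v \<le> g u"
    and glim: "(g \<longlongrightarrow> 0) at_top"
    and growth: "\<exists>\<epsilon>>0. \<forall>\<^sub>F n in sequentially.
        Lambda CARD('d) \<mu> g (real n) / ln (ln (real n)) \<ge> 2 + \<epsilon>"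
  shows "AE \<omega> in M. \<forall>\<^sub>F n in sequentially.
        lambda1 (\<lambda>e. W e \<omega> :: real) n \<le> 2 * real CARD('d) * g (real n)"
proof -
  interpret prob_space M by (rule P)
  obtain \<epsilon> where "\<epsilon> > 0"
    and growth': "\<forall>\<^sub>F n in sequentially. 2 + \<epsilon> \<le> Lambda CARD('d) \<mu> g (real n) / ln (ln (real n))"
    using growth by blast
  have "prob_space \<mu>" using indep law by (rule prob_space_law)
  define r where "r = root CARD('d) (3/2)"
  have r: "1 < r" "r ^ CARD('d) < 2" unfolding r_def by simp_all
  define S where "S k = (even_points (geom_nat r k div 2) :: (int^'d) set)" for k
  have "summable (\<lambda>k.
      (1 - measure \<mu> {..g (real (geom_nat r (Suc k)))} ^ (2 * CARD('d))) ^ card (S k))"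
    unfolding S_def using \<open>prob_space \<mu>\<close> \<open>\<epsilon> > 0\<close> r growth' card_even_points_half_ge
    by (rule summable_one_minus_pow_geom_nat)
  then have "AE \<omega> in M. \<forall>\<^sub>F k in sequentially.
      \<exists>x\<in>S k. \<forall>e\<in>incident_edges x. W e \<omega> \<le> g (real (geom_nat r (Suc k)))"
    unfolding S_def
    by (intro AE_eventually_low_incident_edges[OF indep law] finite_even_points even_points_not_adj)
  then show ?thesis
    using AE_space
  proof eventually_elim
    case (elim \<omega>)
    have nonneg: "0 \<le> W {x, y} \<omega>" if "adj x y" for x y :: "int^'d"
      using pos[OF adj_imp_edge[OF that] elim(2)] by simp
    have "mono (geom_nat r)" using r(1) by (simp add: mono_geom_nat)
    moreover have "\<exists>k. n < geom_nat r k" for n using r(1) by (rule geom_nat_unbounded)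
    moreover have "S k \<subseteq> (box (geom_nat r k) :: (int^'d) set)" for k
      unfolding S_def by (rule even_points_half_subset_box)
    ultimately show ?case
      using nonneg gpos gmono elim(1) by (intro eventually_lambda1_le_of_subsequence[where T = S])
  qed
qed

end
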